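(* Let $a,b\in\mathbb{R}$, let $w(x)=ax+b$, and let $\mathcal{I}\subset\mathbb{R}$ be the set of points where $w>0$. For $\sigma>0$ and $x,y\in\mathbb{R}$ with $w(y)\neq 0$ define the one-step transition density $$p_1(x\mid y,\sigma,a,b)=\frac{k_\sigma(x;y)\,w(x)}{\int_{\mathbb{R}}k_\sigma(z;y)\,w(z)\,\mathrm{d}z},$$ where $k_\sigma(\cdot;y)$ is the Gaussian density with mean $y$ and standard deviation $\sigma$, and for $n\in\mathbb{N}$ define the $n$-step density by the Chapman–Kolmogorov formula $$p_n(x_n\mid x_0,\sigma,a,b)=\int_{\mathbb{R}^{n-1}}\prod_{k=1}^{n}p_1(x_k\mid x_{k-1},\sigma,a,b)\,\mathrm{d}x_1\cdots\mathrm{d}x_{n-1}.$$ Then, restricted to the domain $\mathcal{I}$, the movement model is robust of degree $n$ for every $n\in\mathbb{N}$ with parameter transformation $g_n(\sigma,a,b)=(\sqrt{n}\,\sigma,a,b)$; that is, for every $n\in\mathbb{N}$, every $\sigma>0$ and all $x,y\in\mathcal{I}$, $$p_n(x\mid y,\sigma,a,b)=p_1(x\mid y,\sqrt{n}\,\sigma,a,b).$$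
   Context: This concerns a one-dimensional discrete-time Markov movement model (locations $X_t\in\mathbb{R}$ at times $0,\tau,2\tau,\dots$) whose one-step transition density is a Gaussian movement kernel multiplied by a spatial weighting function $w$ and renormalized, as written in the claim. A model with one-step density $p_1(\cdot\mid\cdot,\bm\theta)$ and $n$-step density $p_n$ is called robust of degree $n$ if there is an injective map $g_n$ on the parameter space with $p_n(x\mid y,\bm\theta)=p_1(x\mid y,g_n(\bm\theta))$ for all $x,y$ (here for all $x,y$ in the restricted domain). *)

theory Defs
  imports "HOL-Probability.Probability"
begin

definition wlin :: "real \<Rightarrow> real \<Rightarrow> real \<Rightarrow> real" where
  "wlin a b x = a * x + b"

definition dom_I :: "real \<Rightarrow> real \<Rightarrow> real set" where
  "dom_I a b = {x. wlin a b x > 0}"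

definition kern :: "real \<Rightarrow> real \<Rightarrow> real \<Rightarrow> real" where
  "kern \<sigma> x y = normal_density y \<sigma> x"

definition p1 :: "real \<Rightarrow> real \<Rightarrow> real \<Rightarrow> real \<Rightarrow> real \<Rightarrow> real" where
  "p1 x y \<sigma> a b =
     kern \<sigma> x y * wlin a b x / (\<integral>z. kern \<sigma> z y * wlin a b z \<partial>lborel)"

text \<open>n-step density via Chapman-Kolmogorov: integral over (x_1,...,x_{n-1}) in R^{n-1}
  (product Lebesgue measure on the index set {1..<n}), with x_0 = y and x_n = x.\<close>
definition pn :: "nat \<Rightarrow> real \<Rightarrow> real \<Rightarrow> real \<Rightarrow> real \<Rightarrow> real \<Rightarrow> real" where
  "pn n x y \<sigma> a b =
     (\<integral>xs. (let xx = (\<lambda>k. if k = 0 then y else if k = n then x else xs k)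
             in \<Prod>k\<in>{1..n}. p1 (xx k) (xx (k - 1)) \<sigma> a b)
        \<partial>(PiM {1..<n} (\<lambda>_. lborel)))"

end

theory Submission
  imports Defs
begin

text \<open>Since the Gaussian kernel has mean \<open>y\<close>, the normalising integral of a linear weight is
  \<open>w(y)\<close> itself, so \<open>p\<^sub>1(x | y) = k\<^sub>\<sigma>(x; y) w(x) / w(y)\<close>. In the Chapman-Kolmogorov product
  the weights telescope to \<open>w(x) / w(y)\<close> (almost everywhere, namely off the zero of \<open>w\<close>), and
  what remains is an \<open>n\<close>-fold Gaussian convolution, the density of \<open>N(y, n\<sigma>\<^sup>2)\<close> at \<open>x\<close>.\<close>

lemma integral_normal_density_affine:
  assumes "\<sigma> > 0"
  shows "(\<integral>z. normal_density \<mu> \<sigma> z * (a * z + b) \<partial>lborel) = a * \<mu> + b"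
proof -
  have "(\<integral>z. normal_density \<mu> \<sigma> z * (a * z + b) \<partial>lborel)
      = (\<integral>z. a * (normal_density \<mu> \<sigma> z * z) + b * normal_density \<mu> \<sigma> z \<partial>lborel)"
    by (rule Bochner_Integration.integral_cong) (auto simp: algebra_simps)
  also have "\<dots> = a * (\<integral>z. normal_density \<mu> \<sigma> z * z \<partial>lborel)
                  + b * (\<integral>z. normal_density \<mu> \<sigma> z \<partial>lborel)"
    using integrable_normal_moment_nz_1[OF assms] integrable_normal_density[OF assms]
    by (subst Bochner_Integration.integral_add) auto
  also have "\<dots> = a * \<mu> + b"
    using integral_normal_moment_nz_1[OF assms] integral_normal_density[OF assms] by simp
  finally show ?thesis .
qed

lemma p1_eq_kern_wlin_ratio:
  assumes "\<sigma> > 0"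
  shows "p1 x y \<sigma> a b = kern \<sigma> x y * wlin a b x / wlin a b y"
  unfolding p1_def kern_def wlin_def using integral_normal_density_affine[OF assms] by simp

definition chain_point :: "nat \<Rightarrow> real \<Rightarrow> real \<Rightarrow> (nat \<Rightarrow> real) \<Rightarrow> nat \<Rightarrow> real" where
  "chain_point n x y xs k = (if k = 0 then y else if k = n then x else xs k)"

lemma measurable_chain_point [measurable]:
  "(\<lambda>xs. chain_point n x y xs k) \<in> borel_measurable (PiM {1..<n} (\<lambda>_. lborel))"
proof (cases "k = 0 \<or> k = n \<or> k \<in> {1..<n}")
  case True
  then show ?thesis unfolding chain_point_def by (cases "k = 0") auto
next
  case False
  then have "chain_point n x y xs k = undefined" if "xs \<in> space (PiM {1..<n} (\<lambda>_. lborel))" for xs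
    using that by (auto simp: chain_point_def space_PiM)
  then show ?thesis
    by (subst measurable_cong[where g = "\<lambda>_. undefined"]) auto
qed

definition gauss_chain :: "real \<Rightarrow> nat \<Rightarrow> real \<Rightarrow> real \<Rightarrow> (nat \<Rightarrow> real) \<Rightarrow> real" where
  "gauss_chain \<sigma> n x y xs =
     (\<Prod>k\<in>{1..n}. kern \<sigma> (chain_point n x y xs k) (chain_point n x y xs (k - 1)))"

lemma measurable_gauss_chain [measurable]:
  "gauss_chain \<sigma> n x y \<in> borel_measurable (PiM {1..<n} (\<lambda>_. lborel))"
  unfolding gauss_chain_def kern_def normal_density_def by measurable

lemma gauss_chain_nonneg: "gauss_chain \<sigma> n x y xs \<ge> 0"
  unfolding gauss_chain_def kern_def by (simp add: prod_nonneg)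

lemma gauss_chain_one: "gauss_chain \<sigma> 1 x y xs = normal_density y \<sigma> x"
  unfolding gauss_chain_def chain_point_def kern_def by simp

lemma gauss_chain_Suc:
  assumes "n \<ge> 1"
  shows "gauss_chain \<sigma> (Suc n) x y (xs(n := t)) = gauss_chain \<sigma> n t y xs * normal_density t \<sigma> x"
proof -
  have "{1..Suc n} = insert (Suc n) {1..n}" by auto
  then have "gauss_chain \<sigma> (Suc n) x y (xs(n := t)) = kern \<sigma> x t *
      (\<Prod>k\<in>{1..n}. kern \<sigma> (chain_point (Suc n) x y (xs(n := t)) k)
                           (chain_point (Suc n) x y (xs(n := t)) (k - 1)))"
    unfolding gauss_chain_def using assms by (simp add: chain_point_def)
  also have "(\<Prod>k\<in>{1..n}. kern \<sigma> (chain_point (Suc n) x y (xs(n := t)) k)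
                                (chain_point (Suc n) x y (xs(n := t)) (k - 1)))
           = gauss_chain \<sigma> n t y xs"
    unfolding gauss_chain_def by (rule prod.cong) (auto simp: chain_point_def)
  finally show ?thesis by (metis kern_def mult.commute)
qed

lemma nn_integral_normal_density_convolution:
  assumes "s > 0" "\<sigma> > 0"
  shows "(\<integral>\<^sup>+ t. ennreal (normal_density y s t * normal_density t \<sigma> x) \<partial>lborel)
       = ennreal (normal_density y (sqrt (\<sigma>\<^sup>2 + s\<^sup>2)) x)"
proof -
  have shift: "normal_density \<mu> \<tau> v = normal_density 0 \<tau> (v - \<mu>)" for \<mu> \<tau> v
    unfolding normal_density_def by simp
  have "(\<integral>\<^sup>+ t. ennreal (normal_density y s t * normal_density t \<sigma> x) \<partial>lborel)
      = ennreal \<bar>1\<bar> * (\<integral>\<^sup>+ u. ennreal (normal_density y s (y + 1 * u)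
                                        * normal_density (y + 1 * u) \<sigma> x) \<partial>lborel)"
    by (rule nn_integral_real_affine) (auto simp: normal_density_def)
  also have "\<dots> = (\<integral>\<^sup>+ u. ennreal (normal_density 0 \<sigma> ((x - y) - u) * normal_density 0 s u) \<partial>lborel)"
  proof -
    have "normal_density y s (y + u) = normal_density 0 s u"
      and "normal_density (y + u) \<sigma> x = normal_density 0 \<sigma> ((x - y) - u)" for u
      unfolding normal_density_def by (auto simp: algebra_simps)
    then show ?thesis by (simp add: mult.commute)
  qed
  also have "\<dots> = ennreal (normal_density y (sqrt (\<sigma>\<^sup>2 + s\<^sup>2)) x)"
    using fun_cong[OF conv_normal_density_zero_mean[OF assms(2,1)], of "x - y"]
    by (simp add: shift[of y])
  finally show ?thesis .
qed

interpretation lborel_product: product_sigma_finite "\<lambda>_::nat. lborel::real measure"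
  by unfold_locales

lemma nn_integral_gauss_chain:
  assumes "\<sigma> > 0" "n \<ge> 1"
  shows "(\<integral>\<^sup>+ xs. ennreal (gauss_chain \<sigma> n x y xs) \<partial>PiM {1..<n} (\<lambda>_. lborel))
       = ennreal (normal_density y (sqrt (real n) * \<sigma>) x)"
  using assms(2)
proof (induction n arbitrary: x rule: nat_induct_at_least)
  case base
  then show ?case by (simp add: PiM_empty gauss_chain_one[unfolded One_nat_def])
next
  case (Suc n)
  have ins: "{1..<Suc n} = insert n {1..<n}" using Suc.hyps by auto
  have "\<sigma>\<^sup>2 + (sqrt (real n) * \<sigma>)\<^sup>2 = real (Suc n) * \<sigma>\<^sup>2"
    by (simp add: algebra_simps)
  then have variance: "sqrt (\<sigma>\<^sup>2 + (sqrt (real n) * \<sigma>)\<^sup>2) = sqrt (real (Suc n)) * \<sigma>"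
    using assms(1) by (simp add: real_sqrt_mult)
  have "(\<integral>\<^sup>+ xs. ennreal (gauss_chain \<sigma> (Suc n) x y xs) \<partial>PiM {1..<Suc n} (\<lambda>_. lborel))
      = (\<integral>\<^sup>+ t. (\<integral>\<^sup>+ xs. ennreal (gauss_chain \<sigma> (Suc n) x y (xs(n := t)))
                    \<partial>PiM {1..<n} (\<lambda>_. lborel)) \<partial>lborel)"
    unfolding ins
    by (rule lborel_product.product_nn_integral_insert_rev)
       (use measurable_gauss_chain[of \<sigma> "Suc n" x y] ins in auto)
  also have "\<dots> = (\<integral>\<^sup>+ t. (\<integral>\<^sup>+ xs. ennreal (gauss_chain \<sigma> n t y xs) * normal_density t \<sigma> x
                    \<partial>PiM {1..<n} (\<lambda>_. lborel)) \<partial>lborel)"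
    using Suc.hyps by (simp add: gauss_chain_Suc gauss_chain_nonneg ennreal_mult)
  also have "\<dots> = (\<integral>\<^sup>+ t. ennreal (normal_density y (sqrt (real n) * \<sigma>) t) * normal_density t \<sigma> x \<partial>lborel)"
  proof (rule nn_integral_cong)
    fix t :: real
    have "(\<lambda>xs. ennreal (gauss_chain \<sigma> n t y xs)) \<in> borel_measurable (PiM {1..<n} (\<lambda>_. lborel))"
      by measurable
    then show "(\<integral>\<^sup>+ xs. ennreal (gauss_chain \<sigma> n t y xs) * normal_density t \<sigma> x \<partial>PiM {1..<n} (\<lambda>_. lborel))
        = ennreal (normal_density y (sqrt (real n) * \<sigma>) t) * normal_density t \<sigma> x"
      using Suc.IH[of t] by (subst nn_integral_multc) auto
  qed
  also have "\<dots> = (\<integral>\<^sup>+ t. ennreal (normal_density y (sqrt (real n) * \<sigma>) t * normal_density t \<sigma> x) \<partial>lborel)"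
    by (simp add: ennreal_mult)
  also have "\<dots> = ennreal (normal_density y (sqrt (real (Suc n)) * \<sigma>) x)"
    using Suc.hyps assms(1) by (subst nn_integral_normal_density_convolution) (auto simp: variance)
  finally show ?case .
qed

lemma integral_gauss_chain:
  assumes "\<sigma> > 0" "n \<ge> 1"
  shows "(\<integral>xs. gauss_chain \<sigma> n x y xs \<partial>PiM {1..<n} (\<lambda>_. lborel))
       = normal_density y (sqrt (real n) * \<sigma>) x"
  using nn_integral_gauss_chain[OF assms, of x y] measurable_gauss_chain[of \<sigma> n x y]
  by (subst integral_eq_nn_integral) (auto simp: gauss_chain_nonneg)

lemma AE_PiM_lborel_component_neq:
  assumes "finite I" "k \<in> I"
  shows "AE xs in PiM I (\<lambda>_::nat. lborel::real measure). xs k \<noteq> c"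
proof -
  have I: "I = insert k (I - {k})" using assms(2) by auto
  have meas: "(\<lambda>xs. indicator {c} (xs k) :: ennreal) \<in> borel_measurable (PiM I (\<lambda>_. lborel))"
    using assms(2) by measurable
  have "(\<integral>\<^sup>+ xs. indicator {c} (xs k) \<partial>PiM I (\<lambda>_::nat. lborel::real measure))
      = (\<integral>\<^sup>+ xs. (\<integral>\<^sup>+ t. indicator {c} ((xs(k := t)) k) \<partial>lborel) \<partial>PiM (I - {k}) (\<lambda>_. lborel))"
    using meas assms by (subst I, subst lborel_product.product_nn_integral_insert) auto
  also have "\<dots> = 0" by simp
  finally have "AE xs in PiM I (\<lambda>_::nat. lborel::real measure). (indicator {c} (xs k) :: ennreal) = 0"
    using nn_integral_0_iff_AE[OF meas] by simp
  then show ?thesis by eventually_elim (auto split: split_indicator)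
qed

lemma AE_PiM_lborel_wlin_nonzero:
  assumes "finite I" "a \<noteq> 0 \<or> b \<noteq> 0"
  shows "AE xs in PiM I (\<lambda>_::nat. lborel). \<forall>j\<in>I. wlin a b (xs j) \<noteq> 0"
proof (rule eventually_ball_finite[OF assms(1)], intro ballI)
  fix j assume "j \<in> I"
  show "AE xs in PiM I (\<lambda>_. lborel). wlin a b (xs j) \<noteq> 0"
  proof (cases "a = 0")
    case True
    then show ?thesis using assms(2) by (simp add: wlin_def)
  next
    case False
    have "AE xs in PiM I (\<lambda>_. lborel). xs j \<noteq> - b / a"
      using AE_PiM_lborel_component_neq[OF assms(1) \<open>j \<in> I\<close>] .
    then show ?thesis
      by eventually_elim (use False in \<open>auto simp: wlin_def field_simps\<close>)
  qed
qed

lemma prod_kern_wlin_ratio_telescope: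
  assumes "n \<ge> 1" "\<And>j. j \<le> n \<Longrightarrow> wlin a b (chain_point n x y xs j) \<noteq> 0"
  shows "(\<Prod>k\<in>{1..n}. kern \<sigma> (chain_point n x y xs k) (chain_point n x y xs (k - 1))
                      * wlin a b (chain_point n x y xs k) / wlin a b (chain_point n x y xs (k - 1)))
       = gauss_chain \<sigma> n x y xs * (wlin a b x / wlin a b y)"
proof -
  define w where "w j = wlin a b (chain_point n x y xs j)" for j
  have "(\<Prod>k\<in>{1..n}. kern \<sigma> (chain_point n x y xs k) (chain_point n x y xs (k - 1))
                      * wlin a b (chain_point n x y xs k) / wlin a b (chain_point n x y xs (k - 1)))
      = gauss_chain \<sigma> n x y xs * (\<Prod>k\<in>{Suc 0..n}. w k / w (k - 1))"
    unfolding gauss_chain_def w_def by (simp add: prod.distrib[symmetric])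
  also have "(\<Prod>k\<in>{Suc 0..n}. w k / w (k - 1)) = w n / w 0"
    using assms by (intro prod_telescope'') (auto simp: w_def)
  finally show ?thesis
    using assms(1) by (simp add: w_def chain_point_def)
qed

theorem theorem1:
  fixes n :: nat and \<sigma> a b x y :: real
  assumes "n \<ge> 1" and "\<sigma> > 0"
    and "x \<in> dom_I a b" and "y \<in> dom_I a b"
  shows "pn n x y \<sigma> a b = p1 x y (sqrt (real n) * \<sigma>) a b"
proof -
  let ?M = "PiM {1..<n} (\<lambda>_::nat. lborel::real measure)"
  let ?z = "chain_point n x y"
  have wx: "wlin a b x > 0" and wy: "wlin a b y > 0"
    using assms(3,4) unfolding dom_I_def by auto
  then have "a \<noteq> 0 \<or> b \<noteq> 0" by (auto simp: wlin_def)
  then have "AE xs in ?M. \<forall>j\<in>{1..<n}. wlin a b (xs j) \<noteq> 0"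
    by (intro AE_PiM_lborel_wlin_nonzero) auto
  then have AE_nonzero: "AE xs in ?M. \<forall>j\<le>n. wlin a b (?z xs j) \<noteq> 0"
    by eventually_elim (use wx wy in \<open>auto simp: chain_point_def\<close>)
  have "pn n x y \<sigma> a b = (\<integral>xs. (\<Prod>k\<in>{1..n}. kern \<sigma> (?z xs k) (?z xs (k - 1))
                             * wlin a b (?z xs k) / wlin a b (?z xs (k - 1))) \<partial>?M)"
    unfolding pn_def chain_point_def Let_def p1_eq_kern_wlin_ratio[OF assms(2)] by simp
  also have "\<dots> = (\<integral>xs. gauss_chain \<sigma> n x y xs * (wlin a b x / wlin a b y) \<partial>?M)"
  proof (rule integral_cong_AE)
    show "(\<lambda>xs. \<Prod>k\<in>{1..n}. kern \<sigma> (?z xs k) (?z xs (k - 1))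
                 * wlin a b (?z xs k) / wlin a b (?z xs (k - 1))) \<in> borel_measurable ?M"
      unfolding kern_def normal_density_def wlin_def by measurable
    show "AE xs in ?M. (\<Prod>k\<in>{1..n}. kern \<sigma> (?z xs k) (?z xs (k - 1))
                 * wlin a b (?z xs k) / wlin a b (?z xs (k - 1)))
               = gauss_chain \<sigma> n x y xs * (wlin a b x / wlin a b y)"
      using AE_nonzero by eventually_elim (rule prod_kern_wlin_ratio_telescope[OF assms(1)], blast)
  qed measurable
  also have "\<dots> = normal_density y (sqrt (real n) * \<sigma>) x * (wlin a b x / wlin a b y)"
    by (simp only: integral_mult_left_zero integral_gauss_chain[OF assms(2,1)])
  also have "\<dots> = p1 x y (sqrt (real n) * \<sigma>) a b"
    using assms(1,2) by (simp add: p1_eq_kern_wlin_ratio kern_def)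
  finally show ?thesis .
qed

end
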